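(* Let $(A_1,\cdot_1,\circ_1)$ and $(A_2,\cdot_2,\circ_2)$ be two anti-pre-Lie Poisson algebras. Define bilinear operations $\cdot$ and $\circ$ on $A_1\otimes A_2$ by $$(x_1\otimes x_2)\cdot(y_1\otimes y_2)=x_1\cdot_1 y_1\otimes x_2\cdot_2 y_2,$$ $$(x_1\otimes x_2)\circ(y_1\otimes y_2)=x_1\circ_1 y_1\otimes x_2\cdot_2 y_2+x_1\cdot_1 y_1\otimes x_2\circ_2 y_2,$$ for all $x_1,y_1\in A_1$, $x_2,y_2\in A_2$. Then $(A_1\otimes A_2,\cdot,\circ)$ is an anti-pre-Lie Poisson algebra.
   Context: All vector spaces are finite-dimensional over a field $\mathbb F$ of characteristic $0$. An anti-pre-Lie algebra is a vector space $A$ with a bilinear operation $\circ$ such that, writing $[x,y]=x\circ y-y\circ x$, for all $x,y,z\in A$: (i) $x\circ(y\circ z)-y\circ(x\circ z)=[y,x]\circ z$, and (ii) $[x,y]\circ z+[y,z]\circ x+[z,x]\circ y=0$. An anti-pre-Lie Poisson algebra is a triple $(A,\cdot,\circ)$ where $(A,\cdot)$ is a commutative associative algebra, $(A,\circ)$ is an anti-pre-Lie algebra, and for all $x,y,z\in A$: $2(x\circ y)\cdot z-2(y\circ x)\cdot z=y\cdot(x\circ z)-x\cdot(y\circ z)$ and $2x\circ(y\cdot z)=(z\cdot x)\circ y+z\cdot(x\circ y)$. *)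

theory Defs
  imports Complex_Main
begin

definition fin_dim_vs :: "('k::field \<Rightarrow> 'v::ab_group_add \<Rightarrow> 'v) \<Rightarrow> bool" where
  "fin_dim_vs s \<longleftrightarrow> vector_space s \<and> (\<exists>B. finite B \<and> module.span s B = UNIV)"

definition bilinear_op :: "('k::field \<Rightarrow> 'v::ab_group_add \<Rightarrow> 'v) \<Rightarrow> ('v \<Rightarrow> 'v \<Rightarrow> 'v) \<Rightarrow> bool" where
  "bilinear_op s m \<longleftrightarrow>
     (\<forall>x. Vector_Spaces.linear s s (m x)) \<and> (\<forall>y. Vector_Spaces.linear s s (\<lambda>x. m x y))"

definition comm_assoc_alg :: "('k::field \<Rightarrow> 'v::ab_group_add \<Rightarrow> 'v) \<Rightarrow> ('v \<Rightarrow> 'v \<Rightarrow> 'v) \<Rightarrow> bool" where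
  "comm_assoc_alg s m \<longleftrightarrow> bilinear_op s m \<and>
     (\<forall>x y. m x y = m y x) \<and> (\<forall>x y z. m (m x y) z = m x (m y z))"

definition anti_pre_Lie :: "('k::field \<Rightarrow> 'v::ab_group_add \<Rightarrow> 'v) \<Rightarrow> ('v \<Rightarrow> 'v \<Rightarrow> 'v) \<Rightarrow> bool" where
  "anti_pre_Lie s c \<longleftrightarrow> bilinear_op s c \<and>
     (\<forall>x y z. c x (c y z) - c y (c x z) = c (c y x - c x y) z) \<and>
     (\<forall>x y z. c (c x y - c y x) z + c (c y z - c z y) x + c (c z x - c x z) y = 0)"

definition anti_pre_Lie_Poisson ::
  "('k::field \<Rightarrow> 'v::ab_group_add \<Rightarrow> 'v) \<Rightarrow> ('v \<Rightarrow> 'v \<Rightarrow> 'v) \<Rightarrow> ('v \<Rightarrow> 'v \<Rightarrow> 'v) \<Rightarrow> bool" where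
  "anti_pre_Lie_Poisson s d c \<longleftrightarrow> fin_dim_vs s \<and> comm_assoc_alg s d \<and> anti_pre_Lie s c \<and>
     (\<forall>x y z. s 2 (d (c x y) z) - s 2 (d (c y x) z) = d y (c x z) - d x (c y z)) \<and>
     (\<forall>x y z. s 2 (c x (d y z)) = c (d z x) y + d z (c x y))"

text \<open>(T, s, tens) is a tensor product of the vector spaces (s1) and (s2):
  tens is bilinear, the pure tensors span T, and tens maps products of linearly
  independent sets injectively onto linearly independent sets (for finite-dimensional
  spaces this is the standard characterisation: tensors of basis vectors form a basis).\<close>

definition is_tensor_product ::
  "('k::field \<Rightarrow> 'a::ab_group_add \<Rightarrow> 'a) \<Rightarrow> ('k \<Rightarrow> 'b::ab_group_add \<Rightarrow> 'b) \<Rightarrow>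
   ('k \<Rightarrow> 't::ab_group_add \<Rightarrow> 't) \<Rightarrow> ('a \<Rightarrow> 'b \<Rightarrow> 't) \<Rightarrow> bool" where
  "is_tensor_product s1 s2 s tens \<longleftrightarrow>
     vector_space s1 \<and> vector_space s2 \<and> vector_space s \<and>
     (\<forall>x. Vector_Spaces.linear s2 s (tens x)) \<and>
     (\<forall>y. Vector_Spaces.linear s1 s (\<lambda>x. tens x y)) \<and>
     module.span s (range (case_prod tens)) = UNIV \<and>
     (\<forall>B1 B2. \<not> module.dependent s1 B1 \<and> \<not> module.dependent s2 B2 \<longrightarrow>
        inj_on (case_prod tens) (B1 \<times> B2) \<and> \<not> module.dependent s (case_prod tens ` (B1 \<times> B2)))"

end

theory Submission
  imports Defs
begin

text \<open>All identities to be checked are multilinear and the pure tensors span the tensor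
  product, so it suffices to check them on pure tensors. There both operations expand into sums
  of tensors of words of degree three, one word from each factor. The terms in which all
  anti-pre-Lie products (written \<open>\<star>\<close> below, as \<open>\<circ>\<close> is function composition) lie in one factor
  cancel by the axioms of that factor; the mixed terms cancel once the words in each factor are
  rewritten to a normal form. The key relation for this is that \<open>x \<star> (y \<cdot> z) + (y \<cdot> z) \<star> x\<close>
  is symmetric in \<open>x\<close>, \<open>y\<close>, \<open>z\<close>, a consequence of both compatibility conditions, which
  reduces the words with one \<open>\<cdot>\<close> and one \<open>\<star>\<close> to combinations of \<open>x \<star> (y \<cdot> z)\<close>,
  \<open>y \<star> (x \<cdot> z)\<close>, \<open>z \<star> (x \<cdot> y)\<close> and \<open>(x \<cdot> y) \<star> z\<close>.\<close>

lemma bilinear_map_simps: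
  assumes "\<And>x. Vector_Spaces.linear s2 s (m x)" and "\<And>y. Vector_Spaces.linear s1 s (\<lambda>x. m x y)"
  shows "m (a + b) y = m a y + m b y" "m x (a' + b') = m x a' + m x b'"
    "m (a - b) y = m a y - m b y" "m x (a' - b') = m x a' - m x b'"
    "m (- a) y = - m a y" "m x (- a') = - m x a'"
    "m (s1 k a) y = s k (m a y)" "m x (s2 k a') = s k (m x a')"
    "m 0 y = 0" "m x 0 = 0"
proof -
  have r: "module_hom s2 s (m x)" and l: "module_hom s1 s (\<lambda>x. m x y)" for x y
    using assms by (simp_all add: module_hom_iff_linear)
  show "m (a + b) y = m a y + m b y" using module_hom.add[OF l] by simp
  show "m x (a' + b') = m x a' + m x b'" using module_hom.add[OF r] by simp
  show "m (a - b) y = m a y - m b y" using module_hom.diff[OF l] by simp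
  show "m x (a' - b') = m x a' - m x b'" using module_hom.diff[OF r] by simp
  show "m (- a) y = - m a y" using module_hom.neg[OF l] by simp
  show "m x (- a') = - m x a'" using module_hom.neg[OF r] by simp
  show "m (s1 k a) y = s k (m a y)" using module_hom.scale[OF l] by simp
  show "m x (s2 k a') = s k (m x a')" using module_hom.scale[OF r] by simp
  show "m 0 y = 0" using module_hom.zero[OF l] by simp
  show "m x 0 = 0" using module_hom.zero[OF r] by simp
qed

lemma bilinear_op_linear:
  assumes "bilinear_op s m"
  shows "Vector_Spaces.linear s s (m x)" and "Vector_Spaces.linear s s (\<lambda>x. m x y)"
  using assms by (simp_all add: bilinear_op_def)

lemma vector_space_scale_two:
  assumes "vector_space s"
  shows "s 2 v = v + v"
proof -
  interpret vector_space s by fact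
  show ?thesis using scale_left_distrib[of 1 1 v] by simp
qed

lemma vector_space_double_cancel:
  fixes s :: "'k::field_char_0 \<Rightarrow> 'v::ab_group_add \<Rightarrow> 'v" and u w :: 'v
  assumes "vector_space s" and "u + u = w + w"
  shows "u = w"
proof -
  interpret V: vector_space s by fact
  show ?thesis
    by (rule V.scale_left_imp_eq[of 2]) (simp_all add: vector_space_scale_two[OF assms(1)] assms(2))
qed

lemma linear_eq_0_on_spanning_set:
  assumes "vector_space s" and "module.span s P = UNIV"
    and "\<And>x y. G (x + y) = G x + G y" and "\<And>k x. G (s k x) = s k (G x)"
    and "\<And>p. p \<in> P \<Longrightarrow> G p = 0"
  shows "G x = 0"
proof -
  have "module_hom s s G"
    using assms(1,3,4) by (simp add: module_hom_iff_linear Vector_Spaces.linear_iff)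
  then show ?thesis
    using module_hom.eq_0_on_span assms(2,5) by blast
qed

lemma bilinear_eq_0_on_spanning_set:
  assumes vs: "vector_space s" and span: "module.span s P = UNIV"
    and "\<And>p q. p \<in> P \<Longrightarrow> q \<in> P \<Longrightarrow> F p q = 0"
    and "\<And>x x' y. F (x + x') y = F x y + F x' y" and "\<And>k x y. F (s k x) y = s k (F x y)"
    and "\<And>x y y'. F x (y + y') = F x y + F x y'" and "\<And>k x y. F x (s k y) = s k (F x y)"
  shows "F x y = 0"
proof -
  have vanish_right: "F x q = 0" if "q \<in> P" for x q
    by (rule linear_eq_0_on_spanning_set[OF vs span, where G = "\<lambda>x. F x q"])
      (simp_all add: assms(3-5) that)
  show ?thesis
    by (rule linear_eq_0_on_spanning_set[OF vs span, where G = "F x"])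
      (simp_all add: assms(6,7) vanish_right)
qed

lemma trilinear_eq_0_on_spanning_set:
  assumes vs: "vector_space s" and span: "module.span s P = UNIV"
    and "\<And>p q r. p \<in> P \<Longrightarrow> q \<in> P \<Longrightarrow> r \<in> P \<Longrightarrow> F p q r = 0"
    and "\<And>x x' y z. F (x + x') y z = F x y z + F x' y z"
    and "\<And>k x y z. F (s k x) y z = s k (F x y z)"
    and "\<And>x y y' z. F x (y + y') z = F x y z + F x y' z"
    and "\<And>k x y z. F x (s k y) z = s k (F x y z)"
    and "\<And>x y z z'. F x y (z + z') = F x y z + F x y z'"
    and "\<And>k x y z. F x y (s k z) = s k (F x y z)"
  shows "F x y z = 0"
proof -
  have vanish_right: "F x y r = 0" if "r \<in> P" for x y r
    by (rule bilinear_eq_0_on_spanning_set[OF vs span, where F = "\<lambda>x y. F x y r"])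
      (simp_all add: assms(3-7) that)
  show ?thesis
    by (rule linear_eq_0_on_spanning_set[OF vs span, where G = "F x y"])
      (simp_all add: assms(8,9) vanish_right)
qed

lemma fin_dim_vs_tensor_product:
  assumes T: "is_tensor_product s1 s2 s tens"
    and "fin_dim_vs s1" and "fin_dim_vs s2"
  shows "fin_dim_vs s"
proof -
  obtain B1 where B1: "finite B1" "module.span s1 B1 = UNIV"
    using assms(2) unfolding fin_dim_vs_def by blast
  obtain B2 where B2: "finite B2" "module.span s2 B2 = UNIV"
    using assms(3) unfolding fin_dim_vs_def by blast
  have vs: "vector_space s" and span: "module.span s (range (case_prod tens)) = UNIV"
    using T by (simp_all add: is_tensor_product_def)
  interpret V: vector_space s by (fact vs)
  have r: "module_hom s2 s (tens x)" and l: "module_hom s1 s (\<lambda>x. tens x y)" for x y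
    using T by (simp_all add: is_tensor_product_def module_hom_iff_linear)
  let ?S = "V.span (case_prod tens ` (B1 \<times> B2))"
  have tens_B2: "tens x b \<in> ?S" if "b \<in> B2" for x b
  proof -
    have "range (\<lambda>x. tens x b) = V.span ((\<lambda>x. tens x b) ` B1)"
      using module_hom.span_image[OF l] B1(2) by simp
    also have "\<dots> \<subseteq> ?S"
      using that by (intro V.span_mono) auto
    finally show ?thesis by auto
  qed
  have "range (tens x) \<subseteq> ?S" for x
  proof -
    have "range (tens x) = V.span (tens x ` B2)"
      using module_hom.span_image[OF r] B2(2) by simp
    also have "\<dots> \<subseteq> ?S"
      using tens_B2 by (intro V.span_minimal V.subspace_span) auto
    finally show ?thesis .
  qed
  then have "V.span (range (case_prod tens)) \<subseteq> ?S"
    by (intro V.span_minimal V.subspace_span) auto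
  then have "?S = UNIV"
    using span by auto
  moreover have "finite (case_prod tens ` (B1 \<times> B2))"
    using B1(1) B2(1) by simp
  ultimately show ?thesis
    unfolding fin_dim_vs_def using vs by blast
qed

locale anti_pre_Lie_Poisson_algebra =
  fixes scale :: "'k::field_char_0 \<Rightarrow> 'a::ab_group_add \<Rightarrow> 'a"
    and dot :: "'a \<Rightarrow> 'a \<Rightarrow> 'a"  (infixl \<open>\<cdot>\<close> 70)
    and circ :: "'a \<Rightarrow> 'a \<Rightarrow> 'a"  (infixl \<open>\<star>\<close> 70)
  assumes anti_pre_Lie_Poisson: "anti_pre_Lie_Poisson scale dot circ"
begin

lemma fin_dim: "fin_dim_vs scale"
  using anti_pre_Lie_Poisson by (simp add: anti_pre_Lie_Poisson_def)

lemma vector_space: "vector_space scale"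
  using fin_dim by (simp add: fin_dim_vs_def)

lemma bilinear_circ: "bilinear_op scale circ"
  using anti_pre_Lie_Poisson by (simp add: anti_pre_Lie_Poisson_def anti_pre_Lie_def)

lemmas circ_simps = bilinear_map_simps[OF bilinear_op_linear[OF bilinear_circ]]

sublocale dot: abel_semigroup dot
proof
  show "(a \<cdot> b) \<cdot> c = a \<cdot> (b \<cdot> c)" and "a \<cdot> b = b \<cdot> a" for a b c
    using anti_pre_Lie_Poisson unfolding anti_pre_Lie_Poisson_def comm_assoc_alg_def by blast+
qed

lemma circ_left_commutator: "x \<star> (y \<star> z) - y \<star> (x \<star> z) = (y \<star> x - x \<star> y) \<star> z"
  using anti_pre_Lie_Poisson by (simp add: anti_pre_Lie_Poisson_def anti_pre_Lie_def)

lemma circ_cyclic_commutator: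
  "(x \<star> y - y \<star> x) \<star> z + (y \<star> z - z \<star> y) \<star> x + (z \<star> x - x \<star> z) \<star> y = 0"
  using anti_pre_Lie_Poisson by (simp add: anti_pre_Lie_Poisson_def anti_pre_Lie_def)

lemma commutator_dot_compat:
  "(x \<star> y) \<cdot> z + (x \<star> y) \<cdot> z - ((y \<star> x) \<cdot> z + (y \<star> x) \<cdot> z) = y \<cdot> (x \<star> z) - x \<cdot> (y \<star> z)"
  using anti_pre_Lie_Poisson
  by (simp add: anti_pre_Lie_Poisson_def vector_space_scale_two[OF vector_space])

lemma circ_dot_compat: "x \<star> (y \<cdot> z) + x \<star> (y \<cdot> z) = (z \<cdot> x) \<star> y + z \<cdot> (x \<star> y)"
  using anti_pre_Lie_Poisson
  by (simp add: anti_pre_Lie_Poisson_def vector_space_scale_two[OF vector_space])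

lemma dot_circ_eq: "x \<cdot> (y \<star> z) = y \<star> (z \<cdot> x) + y \<star> (z \<cdot> x) - (x \<cdot> y) \<star> z"
  using circ_dot_compat[of y z x] by (simp add: algebra_simps)

lemma circ_dot_eq: "(y \<star> z) \<cdot> x = y \<star> (z \<cdot> x) + y \<star> (z \<cdot> x) - (x \<cdot> y) \<star> z"
  by (simp add: dot.commute[of "y \<star> z"] dot_circ_eq)

lemma circ_dot_symmetric: "x \<star> (y \<cdot> z) + (y \<cdot> z) \<star> x = y \<star> (x \<cdot> z) + (x \<cdot> z) \<star> y"
proof (rule vector_space_double_cancel[OF vector_space])
  have "(x \<star> y) \<cdot> z + (x \<star> y) \<cdot> z - ((y \<star> x) \<cdot> z + (y \<star> x) \<cdot> z) - (y \<cdot> (x \<star> z) - x \<cdot> (y \<star> z))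
     = (x \<star> (y \<cdot> z) + (y \<cdot> z) \<star> x + (x \<star> (y \<cdot> z) + (y \<cdot> z) \<star> x))
       - (y \<star> (x \<cdot> z) + (x \<cdot> z) \<star> y + (y \<star> (x \<cdot> z) + (x \<cdot> z) \<star> y))"
    unfolding circ_dot_eq dot_circ_eq dot.commute[of z x] dot.commute[of z y] dot.commute[of y x]
    by (simp add: algebra_simps)
  then show "x \<star> (y \<cdot> z) + (y \<cdot> z) \<star> x + (x \<star> (y \<cdot> z) + (y \<cdot> z) \<star> x)
      = y \<star> (x \<cdot> z) + (x \<cdot> z) \<star> y + (y \<star> (x \<cdot> z) + (x \<cdot> z) \<star> y)"
    using commutator_dot_compat[of x y z] by simp
qed

lemma circ_circ_left_eq: "(y \<star> x) \<star> z = x \<star> (y \<star> z) - y \<star> (x \<star> z) + (x \<star> y) \<star> z"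
  using circ_left_commutator[of x y z] by (simp add: circ_simps algebra_simps)

lemma circ_circ_right_eq:
  "x \<star> (y \<star> z) = y \<star> (x \<star> z) - y \<star> (z \<star> x) + z \<star> (y \<star> x) + x \<star> (z \<star> y) - z \<star> (x \<star> y)"
proof -
  have "x \<star> (y \<star> z)
      - (y \<star> (x \<star> z) - y \<star> (z \<star> x) + z \<star> (y \<star> x) + x \<star> (z \<star> y) - z \<star> (x \<star> y))
    = (x \<star> (y \<star> z) - y \<star> (x \<star> z) - (y \<star> x - x \<star> y) \<star> z)
      + (y \<star> (z \<star> x) - z \<star> (y \<star> x) - (z \<star> y - y \<star> z) \<star> x)
      - (x \<star> (z \<star> y) - z \<star> (x \<star> y) - (z \<star> x - x \<star> z) \<star> y)
      - ((x \<star> y - y \<star> x) \<star> z + (y \<star> z - z \<star> y) \<star> x + (z \<star> x - x \<star> z) \<star> y)"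
    by (simp add: circ_simps algebra_simps)
  also have "\<dots> = 0"
    by (simp add: circ_left_commutator circ_cyclic_commutator)
  finally show ?thesis
    by simp
qed

text \<open>Oriented rewrite rules, for fixed \<open>x\<close>, \<open>y\<close>, \<open>z\<close>, that bring every word of degree
  three using each letter once into a normal form, together with \<open>dot_circ_eq\<close>,
  \<open>circ_dot_eq\<close> and \<open>circ_circ_right_eq\<close>.\<close>

lemma dot_dot_normal_form:
  "(x \<cdot> y) \<cdot> z = x \<cdot> (y \<cdot> z)" "x \<cdot> (z \<cdot> y) = x \<cdot> (y \<cdot> z)" "(x \<cdot> z) \<cdot> y = x \<cdot> (y \<cdot> z)"
  "y \<cdot> (x \<cdot> z) = x \<cdot> (y \<cdot> z)" "(y \<cdot> x) \<cdot> z = x \<cdot> (y \<cdot> z)" "y \<cdot> (z \<cdot> x) = x \<cdot> (y \<cdot> z)"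
  "(y \<cdot> z) \<cdot> x = x \<cdot> (y \<cdot> z)" "z \<cdot> (x \<cdot> y) = x \<cdot> (y \<cdot> z)" "(z \<cdot> x) \<cdot> y = x \<cdot> (y \<cdot> z)"
  "z \<cdot> (y \<cdot> x) = x \<cdot> (y \<cdot> z)" "(z \<cdot> y) \<cdot> x = x \<cdot> (y \<cdot> z)"
  by (simp_all add: ac_simps)

lemma circ_dot_normal_form:
  "x \<star> (z \<cdot> y) = x \<star> (y \<cdot> z)" "y \<star> (z \<cdot> x) = y \<star> (x \<cdot> z)" "z \<star> (y \<cdot> x) = z \<star> (x \<cdot> y)"
  "(y \<cdot> x) \<star> z = (x \<cdot> y) \<star> z"
  "(y \<cdot> z) \<star> x = (x \<cdot> y) \<star> z + z \<star> (x \<cdot> y) - x \<star> (y \<cdot> z)"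
  "(z \<cdot> y) \<star> x = (x \<cdot> y) \<star> z + z \<star> (x \<cdot> y) - x \<star> (y \<cdot> z)"
  "(x \<cdot> z) \<star> y = (x \<cdot> y) \<star> z + z \<star> (x \<cdot> y) - y \<star> (x \<cdot> z)"
  "(z \<cdot> x) \<star> y = (x \<cdot> y) \<star> z + z \<star> (x \<cdot> y) - y \<star> (x \<cdot> z)"
  using circ_dot_symmetric[of x z y] circ_dot_symmetric[of y z x]
  by (simp_all add: dot.commute algebra_simps)

lemma circ_circ_normal_form:
  "(y \<star> x) \<star> z = x \<star> (z \<star> y) - z \<star> (x \<star> y) - y \<star> (z \<star> x) + z \<star> (y \<star> x) + (x \<star> y) \<star> z"
  "(z \<star> x) \<star> y = x \<star> (z \<star> y) - z \<star> (x \<star> y) + (x \<star> z) \<star> y"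
  "(z \<star> y) \<star> x = y \<star> (z \<star> x) - z \<star> (y \<star> x) + (y \<star> z) \<star> x"
  using circ_circ_right_eq[of x y z] circ_circ_left_eq[of x y z] circ_circ_left_eq[of x z y]
    circ_circ_left_eq[of y z x]
  by simp_all

end

locale anti_pre_Lie_Poisson_tensor =
  A1: anti_pre_Lie_Poisson_algebra s1 d1 c1 + A2: anti_pre_Lie_Poisson_algebra s2 d2 c2
  for s1 :: "'k::field_char_0 \<Rightarrow> 'a::ab_group_add \<Rightarrow> 'a" and d1 c1
    and s2 :: "'k \<Rightarrow> 'b::ab_group_add \<Rightarrow> 'b" and d2 c2 +
  fixes s :: "'k \<Rightarrow> 't::ab_group_add \<Rightarrow> 't"
    and tens :: "'a \<Rightarrow> 'b \<Rightarrow> 't"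
    and d c :: "'t \<Rightarrow> 't \<Rightarrow> 't"
  assumes tensor_product: "is_tensor_product s1 s2 s tens"
    and bilinear_d: "bilinear_op s d"
    and bilinear_c: "bilinear_op s c"
    and d_tens: "d (tens x1 x2) (tens y1 y2) = tens (d1 x1 y1) (d2 x2 y2)"
    and c_tens: "c (tens x1 x2) (tens y1 y2) = tens (c1 x1 y1) (d2 x2 y2) + tens (d1 x1 y1) (c2 x2 y2)"
begin

sublocale V: vector_space s
  using tensor_product by (simp add: is_tensor_product_def)

lemma span_pure_tensors: "module.span s (range (case_prod tens)) = UNIV"
  using tensor_product by (simp add: is_tensor_product_def)

lemma tens_linear: "Vector_Spaces.linear s2 s (tens x)" "Vector_Spaces.linear s1 s (\<lambda>x. tens x y)"
  using tensor_product by (simp_all add: is_tensor_product_def)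

lemmas tens_simps = bilinear_map_simps[OF tens_linear]

lemmas d_simps = bilinear_map_simps[OF bilinear_op_linear[OF bilinear_d]]
lemmas c_simps = bilinear_map_simps[OF bilinear_op_linear[OF bilinear_c]]

lemma d_commute_pure: "d (tens x1 x2) (tens y1 y2) = d (tens y1 y2) (tens x1 x2)"
  by (simp add: d_tens A1.dot.commute[of x1] A2.dot.commute[of x2])

lemma pure_tensor_identities:
  fixes x1 y1 z1 :: 'a and x2 y2 z2 :: 'b
  defines "x \<equiv> tens x1 x2" and "y \<equiv> tens y1 y2" and "z \<equiv> tens z1 z2"
  shows d_assoc_pure: "d (d x y) z = d x (d y z)"
    and c_left_commutator_pure: "c x (c y z) - c y (c x z) = c (c y x - c x y) z"
    and c_cyclic_commutator_pure: "c (c x y - c y x) z + c (c y z - c z y) x + c (c z x - c x z) y = 0"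
    and commutator_d_compat_pure:
      "d (c x y) z + d (c x y) z - (d (c y x) z + d (c y x) z) = d y (c x z) - d x (c y z)"
    and c_d_compat_pure: "c x (d y z) + c x (d y z) = c (d z x) y + d z (c x y)"
  unfolding assms
  by (simp_all only: d_tens c_tens d_simps c_simps tens_simps
      A1.dot_circ_eq A1.circ_dot_eq A2.dot_circ_eq A2.circ_dot_eq
      A1.dot_dot_normal_form[where x = x1 and y = y1 and z = z1]
      A1.circ_dot_normal_form[where x = x1 and y = y1 and z = z1]
      A1.circ_circ_normal_form[where x = x1 and y = y1 and z = z1]
      A1.circ_circ_right_eq[where x = x1 and y = y1 and z = z1]
      A2.dot_dot_normal_form[where x = x2 and y = y2 and z = z2]
      A2.circ_dot_normal_form[where x = x2 and y = y2 and z = z2]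
      A2.circ_circ_normal_form[where x = x2 and y = y2 and z = z2]
      A2.circ_circ_right_eq[where x = x2 and y = y2 and z = z2])
    (simp_all add: algebra_simps)

lemma d_commute: "d x y = d y x"
proof -
  have "d x y - d y x = 0"
    by (rule bilinear_eq_0_on_spanning_set[OF V.vector_space_axioms span_pure_tensors,
          where F = "\<lambda>x y. d x y - d y x"])
      (force simp: d_commute_pure, simp_all add: d_simps algebra_simps)
  then show ?thesis by simp
qed

lemma d_assoc: "d (d x y) z = d x (d y z)"
proof -
  have "d (d x y) z - d x (d y z) = 0"
    by (rule trilinear_eq_0_on_spanning_set[OF V.vector_space_axioms span_pure_tensors,
          where F = "\<lambda>x y z. d (d x y) z - d x (d y z)"])
      (force simp: d_assoc_pure, simp_all add: d_simps algebra_simps)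
  then show ?thesis by simp
qed

lemma c_left_commutator: "c x (c y z) - c y (c x z) = c (c y x - c x y) z"
proof -
  have "c x (c y z) - c y (c x z) - c (c y x - c x y) z = 0"
    by (rule trilinear_eq_0_on_spanning_set[OF V.vector_space_axioms span_pure_tensors,
          where F = "\<lambda>x y z. c x (c y z) - c y (c x z) - c (c y x - c x y) z"])
      (force simp: c_left_commutator_pure, simp_all add: c_simps algebra_simps)
  then show ?thesis by simp
qed

lemma c_cyclic_commutator: "c (c x y - c y x) z + c (c y z - c z y) x + c (c z x - c x z) y = 0"
  by (rule trilinear_eq_0_on_spanning_set[OF V.vector_space_axioms span_pure_tensors,
        where F = "\<lambda>x y z. c (c x y - c y x) z + c (c y z - c z y) x + c (c z x - c x z) y"])
      (force simp: c_cyclic_commutator_pure, simp_all add: c_simps algebra_simps)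

lemma commutator_d_compat:
  "d (c x y) z + d (c x y) z - (d (c y x) z + d (c y x) z) = d y (c x z) - d x (c y z)"
proof -
  have "d (c x y) z + d (c x y) z - (d (c y x) z + d (c y x) z) - (d y (c x z) - d x (c y z)) = 0"
    by (rule trilinear_eq_0_on_spanning_set[OF V.vector_space_axioms span_pure_tensors,
          where F = "\<lambda>x y z. d (c x y) z + d (c x y) z - (d (c y x) z + d (c y x) z)
                              - (d y (c x z) - d x (c y z))"])
      (force simp: commutator_d_compat_pure, simp_all add: c_simps d_simps algebra_simps)
  then show ?thesis by simp
qed

lemma c_d_compat: "c x (d y z) + c x (d y z) = c (d z x) y + d z (c x y)"
proof -
  have "c x (d y z) + c x (d y z) - (c (d z x) y + d z (c x y)) = 0"
    by (rule trilinear_eq_0_on_spanning_set[OF V.vector_space_axioms span_pure_tensors,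
          where F = "\<lambda>x y z. c x (d y z) + c x (d y z) - (c (d z x) y + d z (c x y))"])
      (force simp: c_d_compat_pure, simp_all add: c_simps d_simps algebra_simps)
  then show ?thesis by simp
qed

lemma tensor_product_anti_pre_Lie_Poisson: "anti_pre_Lie_Poisson s d c"
  using fin_dim_vs_tensor_product[OF tensor_product A1.fin_dim A2.fin_dim]
    bilinear_d bilinear_c d_commute d_assoc c_left_commutator c_cyclic_commutator
    commutator_d_compat c_d_compat
  unfolding anti_pre_Lie_Poisson_def comm_assoc_alg_def anti_pre_Lie_def
    vector_space_scale_two[OF V.vector_space_axioms]
  by blast

end

theorem theorem3p47:
  fixes s1 :: "'k::field_char_0 \<Rightarrow> 'a::ab_group_add \<Rightarrow> 'a"
    and d1 c1 :: "'a \<Rightarrow> 'a \<Rightarrow> 'a"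
    and s2 :: "'k \<Rightarrow> 'b::ab_group_add \<Rightarrow> 'b"
    and d2 c2 :: "'b \<Rightarrow> 'b \<Rightarrow> 'b"
    and s :: "'k \<Rightarrow> 't::ab_group_add \<Rightarrow> 't"
    and tens :: "'a \<Rightarrow> 'b \<Rightarrow> 't"
    and d c :: "'t \<Rightarrow> 't \<Rightarrow> 't"
  assumes A1: "anti_pre_Lie_Poisson s1 d1 c1"
    and A2: "anti_pre_Lie_Poisson s2 d2 c2"
    and T: "is_tensor_product s1 s2 s tens"
    and bd: "bilinear_op s d"
    and bc: "bilinear_op s c"
    and d_def: "\<And>x1 x2 y1 y2. d (tens x1 x2) (tens y1 y2) = tens (d1 x1 y1) (d2 x2 y2)"
    and c_def: "\<And>x1 x2 y1 y2. c (tens x1 x2) (tens y1 y2) =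
                  tens (c1 x1 y1) (d2 x2 y2) + tens (d1 x1 y1) (c2 x2 y2)"
  shows "anti_pre_Lie_Poisson s d c"
proof -
  interpret anti_pre_Lie_Poisson_tensor s1 d1 c1 s2 d2 c2 s tens d c
    by (simp add: anti_pre_Lie_Poisson_tensor_def anti_pre_Lie_Poisson_tensor_axioms_def
        anti_pre_Lie_Poisson_algebra_def assms)
  show ?thesis
    by (fact tensor_product_anti_pre_Lie_Poisson)
qed

end
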